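(* Let $A,B$ be non-empty sets, $I$ a non-empty index set, $\{V_i\}_{i\in I}\subseteq\mathcal R(A)$, $\{W_i\}_{i\in I}\subseteq\mathcal R(B)$, $Z\in\mathcal R(A,B)$, and let $\phi^{(1)},\dots,\phi^{(6)}:\mathcal R(A,B)\to\mathcal R(A,B)$ be defined by $\phi^{(1)}(R)=\bigwedge_{i\in I}[(W_i\circ R^{-1})\backslash V_i]^{-1}$, $\phi^{(2)}(R)=\bigwedge_{i\in I}(R\circ W_i)/V_i$, $\phi^{(3)}(R)=\bigwedge_{i\in I}[(W_i\circ R^{-1})\backslash V_i]^{-1}\wedge[(V_i\circ R)\backslash W_i]$, $\phi^{(4)}(R)=\bigwedge_{i\in I}[(R\circ W_i)/V_i]\wedge[(R^{-1}\circ V_i)/W_i]^{-1}$, $\phi^{(5)}(R)=\bigwedge_{i\in I}[(R\circ W_i)/V_i]\wedge[(V_i\circ R)\backslash W_i]$, $\phi^{(6)}(R)=\bigwedge_{i\in I}[(W_i\circ R^{-1})\backslash V_i]^{-1}\wedge[(R^{-1}\circ V_i)/W_i]^{-1}$. Then for every $t\in\{1,\dots,6\}$, a fuzzy relation $U\in\mathcal R(A,B)$ is a solution to $WL^{2\text{-}t}(A,B,I,V_i,W_i,Z)$ if and only if $U\le\phi^{(t)}(U)$ and $U\le Z$.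
   Context: $\mathcal L=(L,\wedge,\vee,\otimes,\to,0,1)$ is a complete residuated lattice. For non-empty sets $X,Y$, $\mathcal R(X,Y)$ is the set of fuzzy relations $X\times Y\to L$, $\mathcal R(X)=\mathcal R(X,X)$, ordered pointwise with pointwise meets; $R^{-1}(y,x)=R(x,y)$; $(R\circ S)(x,t)=\bigvee_{y}R(x,y)\otimes S(y,t)$. Residuals: for $S\in\mathcal R(X,Y)$, $T\in\mathcal R(X)$, $T'\in\mathcal R(Y)$, the right residual $S/T\in\mathcal R(X,Y)$ is $(S/T)(x,y)=\bigwedge_{x'\in X}(T(x',x)\to S(x',y))$ and the left residual $S\backslash T'\in\mathcal R(X,Y)$ is $(S\backslash T')(x,y)=\bigwedge_{y'\in Y}(T'(y,y')\to S(x,y'))$. Heterogeneous systems with unknown $U\in\mathcal R(A,B)$: $WL^{2\text{-}1}$: $U^{-1}\circ V_i\le W_i\circ U^{-1}$ ($i\in I$), $U\le Z$; $WL^{2\text{-}2}$: $V_i\circ U\le U\circ W_i$ ($i\in I$), $U\le Z$; $WL^{2\text{-}3}$: $U^{-1}\circ V_i\le W_i\circ U^{-1}$ and $U\circ W_i\le V_i\circ U$ ($i\in I$), $U\le Z$; $WL^{2\text{-}4}$: $V_i\circ U\le U\circ W_i$ and $W_i\circ U^{-1}\le U^{-1}\circ V_i$ ($i\in I$), $U\le Z$; $WL^{2\text{-}5}$: $V_i\circ U=U\circ W_i$ ($i\in I$), $U\le Z$; $WL^{2\text{-}6}$: $U^{-1}\circ V_i=W_i\circ U^{-1}$ ($i\in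 I$), $U\le Z$. *)

theory Defs
  imports Main
begin

text \<open>Complete residuated lattice: the carrier is a type of class complete_lattice
 (0 = bot, 1 = top), with a multiplication m (the product) and residuum r (the arrow).\<close>
definition complete_residuated_lattice ::
  "('l::complete_lattice \<Rightarrow> 'l \<Rightarrow> 'l) \<Rightarrow> ('l \<Rightarrow> 'l \<Rightarrow> 'l) \<Rightarrow> bool" where
  "complete_residuated_lattice m r \<longleftrightarrow>
     (\<forall>x y z. m (m x y) z = m x (m y z)) \<and>
     (\<forall>x y. m x y = m y x) \<and>
     (\<forall>x. m x top = x) \<and>
     (\<forall>x y z. m x y \<le> z \<longleftrightarrow> x \<le> r y z)"

text \<open>Fuzzy relations X x Y -> L are functions 'x => 'y => 'l, ordered pointwise
 (library order on functions), meets pointwise (library Inf on functions).\<close>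

definition fconv :: "('x \<Rightarrow> 'y \<Rightarrow> 'l) \<Rightarrow> ('y \<Rightarrow> 'x \<Rightarrow> 'l)" where
  "fconv R = (\<lambda>y x. R x y)"

definition fcomp :: "('l::complete_lattice \<Rightarrow> 'l \<Rightarrow> 'l) \<Rightarrow>
    ('x \<Rightarrow> 'y \<Rightarrow> 'l) \<Rightarrow> ('y \<Rightarrow> 'z \<Rightarrow> 'l) \<Rightarrow> ('x \<Rightarrow> 'z \<Rightarrow> 'l)" where
  "fcomp m R S = (\<lambda>x t. SUP y. m (R x y) (S y t))"

definition rres :: "('l::complete_lattice \<Rightarrow> 'l \<Rightarrow> 'l) \<Rightarrow>
    ('x \<Rightarrow> 'y \<Rightarrow> 'l) \<Rightarrow> ('x \<Rightarrow> 'x \<Rightarrow> 'l) \<Rightarrow> ('x \<Rightarrow> 'y \<Rightarrow> 'l)" where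
  "rres r S T = (\<lambda>x y. INF x'. r (T x' x) (S x' y))"

definition lres :: "('l::complete_lattice \<Rightarrow> 'l \<Rightarrow> 'l) \<Rightarrow>
    ('x \<Rightarrow> 'y \<Rightarrow> 'l) \<Rightarrow> ('y \<Rightarrow> 'y \<Rightarrow> 'l) \<Rightarrow> ('x \<Rightarrow> 'y \<Rightarrow> 'l)" where
  "lres r S T' = (\<lambda>x y. INF y'. r (T' y y') (S x y'))"

definition WL1 where
  "WL1 m I V W Z U \<longleftrightarrow>
     (\<forall>i\<in>I. fcomp m (fconv U) (V i) \<le> fcomp m (W i) (fconv U)) \<and> U \<le> Z"
definition WL2 where
  "WL2 m I V W Z U \<longleftrightarrow>
     (\<forall>i\<in>I. fcomp m (V i) U \<le> fcomp m U (W i)) \<and> U \<le> Z"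
definition WL3 where
  "WL3 m I V W Z U \<longleftrightarrow>
     (\<forall>i\<in>I. fcomp m (fconv U) (V i) \<le> fcomp m (W i) (fconv U) \<and>
             fcomp m U (W i) \<le> fcomp m (V i) U) \<and> U \<le> Z"
definition WL4 where
  "WL4 m I V W Z U \<longleftrightarrow>
     (\<forall>i\<in>I. fcomp m (V i) U \<le> fcomp m U (W i) \<and>
             fcomp m (W i) (fconv U) \<le> fcomp m (fconv U) (V i)) \<and> U \<le> Z"
definition WL5 where
  "WL5 m I V W Z U \<longleftrightarrow>
     (\<forall>i\<in>I. fcomp m (V i) U = fcomp m U (W i)) \<and> U \<le> Z"
definition WL6 where
  "WL6 m I V W Z U \<longleftrightarrow>
     (\<forall>i\<in>I. fcomp m (fconv U) (V i) = fcomp m (W i) (fconv U)) \<and> U \<le> Z"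

definition phi1 where
  "phi1 m r I V W R = (INF i\<in>I. fconv (lres r (fcomp m (W i) (fconv R)) (V i)))"
definition phi2 where
  "phi2 m r I V W R = (INF i\<in>I. rres r (fcomp m R (W i)) (V i))"
definition phi3 where
  "phi3 m r I V W R = (INF i\<in>I. inf (fconv (lres r (fcomp m (W i) (fconv R)) (V i)))
                                      (lres r (fcomp m (V i) R) (W i)))"
definition phi4 where
  "phi4 m r I V W R = (INF i\<in>I. inf (rres r (fcomp m R (W i)) (V i))
                                      (fconv (rres r (fcomp m (fconv R) (V i)) (W i))))"
definition phi5 where
  "phi5 m r I V W R = (INF i\<in>I. inf (rres r (fcomp m R (W i)) (V i))
                                      (lres r (fcomp m (V i) R) (W i)))"
definition phi6 where
  "phi6 m r I V W R = (INF i\<in>I. inf (fconv (lres r (fcomp m (W i) (fconv R)) (V i)))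
                                      (fconv (rres r (fcomp m (fconv R) (V i)) (W i))))"

end

theory Submission
  imports Defs
begin

text \<open>Each inequation of the systems is an adjunction condition: composition with a fixed
  relation is left adjoint to the corresponding residual, and converse is an order
  isomorphism. So every system says that U lies below the meet of the residuals, i.e.
  below phi(U).\<close>

lemma residuated_iff:
  assumes "complete_residuated_lattice m r"
  shows "m y x \<le> z \<longleftrightarrow> x \<le> r y z"
  using assms unfolding complete_residuated_lattice_def by metis

lemma fcomp_le_iff_le_rres:
  assumes "complete_residuated_lattice m r"
  shows "fcomp m T U \<le> S \<longleftrightarrow> U \<le> rres r S T"
proof -
  have "fcomp m T U \<le> S \<longleftrightarrow> (\<forall>x' y x. m (T x' x) (U x y) \<le> S x' y)"
    unfolding fcomp_def le_fun_def SUP_le_iff by blast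
  also have "\<dots> \<longleftrightarrow> (\<forall>x' y x. U x y \<le> r (T x' x) (S x' y))"
    using residuated_iff[OF assms] by blast
  also have "\<dots> \<longleftrightarrow> U \<le> rres r S T"
    unfolding rres_def le_fun_def le_INF_iff by blast
  finally show ?thesis .
qed

lemma fcomp_le_iff_le_lres:
  assumes "complete_residuated_lattice m r"
  shows "fcomp m U T \<le> S \<longleftrightarrow> U \<le> lres r S T"
proof -
  have commute: "\<And>a b. m a b = m b a"
    using assms unfolding complete_residuated_lattice_def by blast
  have "fcomp m U T \<le> S \<longleftrightarrow> (\<forall>x y' y. m (T y y') (U x y) \<le> S x y')"
    unfolding fcomp_def le_fun_def SUP_le_iff by (simp add: commute)
  also have "\<dots> \<longleftrightarrow> (\<forall>x y' y. U x y \<le> r (T y y') (S x y'))"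
    using residuated_iff[OF assms] by blast
  also have "\<dots> \<longleftrightarrow> U \<le> lres r S T"
    unfolding lres_def le_fun_def le_INF_iff by blast
  finally show ?thesis .
qed

lemma fconv_le_iff: "fconv U \<le> X \<longleftrightarrow> U \<le> fconv X"
  unfolding fconv_def le_fun_def by blast

lemma fcomp_fconv_le_iff_le_fconv_lres:
  assumes "complete_residuated_lattice m r"
  shows "fcomp m (fconv U) T \<le> S \<longleftrightarrow> U \<le> fconv (lres r S T)"
  using fcomp_le_iff_le_lres[OF assms] fconv_le_iff by metis

lemma fcomp_fconv_le_iff_le_fconv_rres:
  assumes "complete_residuated_lattice m r"
  shows "fcomp m T (fconv U) \<le> S \<longleftrightarrow> U \<le> fconv (rres r S T)"
  using fcomp_le_iff_le_rres[OF assms] fconv_le_iff by metis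

theorem theorem4p5:
  fixes m r :: "'l::complete_lattice \<Rightarrow> 'l \<Rightarrow> 'l"
    and I :: "'i set"
    and V :: "'i \<Rightarrow> 'a \<Rightarrow> 'a \<Rightarrow> 'l"
    and W :: "'i \<Rightarrow> 'b \<Rightarrow> 'b \<Rightarrow> 'l"
    and Z U :: "'a \<Rightarrow> 'b \<Rightarrow> 'l"
  assumes "complete_residuated_lattice m r"
    and "I \<noteq> {}"
  shows "(WL1 m I V W Z U \<longleftrightarrow> U \<le> phi1 m r I V W U \<and> U \<le> Z) \<and>
         (WL2 m I V W Z U \<longleftrightarrow> U \<le> phi2 m r I V W U \<and> U \<le> Z) \<and>
         (WL3 m I V W Z U \<longleftrightarrow> U \<le> phi3 m r I V W U \<and> U \<le> Z) \<and>
         (WL4 m I V W Z U \<longleftrightarrow> U \<le> phi4 m r I V W U \<and> U \<le> Z) \<and>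
         (WL5 m I V W Z U \<longleftrightarrow> U \<le> phi5 m r I V W U \<and> U \<le> Z) \<and>
         (WL6 m I V W Z U \<longleftrightarrow> U \<le> phi6 m r I V W U \<and> U \<le> Z)"
proof -
  note crl = assms(1)
  have VU_le_UW: "fcomp m (V i) U \<le> fcomp m U (W i) \<longleftrightarrow>
      U \<le> rres r (fcomp m U (W i)) (V i)" for i
    using fcomp_le_iff_le_rres[OF crl] .
  have UW_le_VU: "fcomp m U (W i) \<le> fcomp m (V i) U \<longleftrightarrow>
      U \<le> lres r (fcomp m (V i) U) (W i)" for i
    using fcomp_le_iff_le_lres[OF crl] .
  have UV_le_WU: "fcomp m (fconv U) (V i) \<le> fcomp m (W i) (fconv U) \<longleftrightarrow>
      U \<le> fconv (lres r (fcomp m (W i) (fconv U)) (V i))" for i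
    using fcomp_fconv_le_iff_le_fconv_lres[OF crl] .
  have WU_le_UV: "fcomp m (W i) (fconv U) \<le> fcomp m (fconv U) (V i) \<longleftrightarrow>
      U \<le> fconv (rres r (fcomp m (fconv U) (V i)) (W i))" for i
    using fcomp_fconv_le_iff_le_fconv_rres[OF crl] .
  show ?thesis
    unfolding WL1_def WL2_def WL3_def WL4_def WL5_def WL6_def
      phi1_def phi2_def phi3_def phi4_def phi5_def phi6_def
    by (simp add: le_INF_iff VU_le_UW UW_le_VU UV_le_WU WU_le_UV eq_iff conj_ac)
qed

end
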